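(* Let $I$ be an instance and let $\sigma$ and $\sigma'$ be two maximal $I$-feasible sequences (i.e. $I$-feasible sequences admitting no $I$-feasible one-event extension). Then $\sigma$ and $\sigma'$ contain the same set of events.
   Context: An instance $I$ consists of finite disjoint sets $R$ (residents) and $H$ (hospitals), a positive integer quota $q_h$ for each $h\in H$, for each $r\in R$ a preference list of $r$ (a sequence of distinct members of $H$, not necessarily all), and for each $h\in H$ a preference list of $h$ (a sequence of distinct members of $R$). A match is a pair $(r,h)\in R\times H$. For a set $M$ of matches, $\mathrm{res}_h M=\{r:(r,h)\in M\}$, $\mathrm{res}\,M=\{r:(r,h)\in M\text{ for some }h\}$. An event is $(r,h)^+$ (proposal) or $(r,h)^-$ (rejection). For an event sequence $\sigma$, $\mathrm{prop}(\sigma)$, $\mathrm{rej}(\sigma)$ are the sets of matches proposed/rejected in $\sigma$ and $\mathrm{tent}(\sigma)=\mathrm{prop}(\sigma)\setminus\mathrm{rej}(\sigma)$. A match $(r,h)\in M$ is ousted from $M$ in $I$ if the list of $h$ in $I$ contains at least $q_h$ residents of $\mathrm{res}_h M$ and either $r$ is not on it or $r$ is preceded on it by at least $q_h$ residents of $\mathrm{res}_h M$. $I$-feasible sequences are defined inductively: the empty sequence is $I$-feasible; if $\sigma$ is $I$-feasible then $\sigma+(r,h)^+$ is $I$-feasible if $r\notin\mathrm{res}\,\mathrm{tent}(\sigma)$, $(r,h)\notin\mathrm{prop}(\sigma)$, $h$ is on the list of $r$ in $I$ and $(r,h')\in\mathrm{rej}(\sigma)$ for every $h'$ preceding $h$ on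 it; and $\sigma+(r,h)^-$ is $I$-feasible if $(r,h)$ is ousted from $\mathrm{prop}(\sigma)$ in $I$ and $(r,h)\notin\mathrm{rej}(\sigma)$. *)

theory Defs
  imports Main
begin

text \<open>An instance: residents R, hospitals H, quotas, and preference lists.
  Residents and hospitals live in distinct types, so R and H are disjoint.\<close>
record ('r, 'h) hr_instance =
  Res   :: "'r set"
  Hos   :: "'h set"
  quota :: "'h \<Rightarrow> nat"
  prefR :: "'r \<Rightarrow> 'h list"
  prefH :: "'h \<Rightarrow> 'r list"

definition valid_instance :: "('r, 'h) hr_instance \<Rightarrow> bool" where
  "valid_instance I \<longleftrightarrow>
     finite (Res I) \<and> finite (Hos I) \<and>
     (\<forall>h\<in>Hos I. quota I h > 0) \<and>
     (\<forall>r\<in>Res I. distinct (prefR I r) \<and> set (prefR I r) \<subseteq> Hos I) \<and>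
     (\<forall>h\<in>Hos I. distinct (prefH I h) \<and> set (prefH I h) \<subseteq> Res I)"

datatype ('r, 'h) event = Prop 'r 'h | Rej 'r 'h

definition res_h :: "'h \<Rightarrow> ('r \<times> 'h) set \<Rightarrow> 'r set" where
  "res_h h M = {r. (r, h) \<in> M}"

definition res :: "('r \<times> 'h) set \<Rightarrow> 'r set" where
  "res M = {r. \<exists>h. (r, h) \<in> M}"

definition prop_set :: "('r, 'h) event list \<Rightarrow> ('r \<times> 'h) set" where
  "prop_set \<sigma> = {(r, h). Prop r h \<in> set \<sigma>}"

definition rej_set :: "('r, 'h) event list \<Rightarrow> ('r \<times> 'h) set" where
  "rej_set \<sigma> = {(r, h). Rej r h \<in> set \<sigma>}"

definition tent :: "('r, 'h) event list \<Rightarrow> ('r \<times> 'h) set" where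
  "tent \<sigma> = prop_set \<sigma> - rej_set \<sigma>"

text \<open>Elements preceding x on list xs (meaningful when x occurs in xs).\<close>
definition preceding :: "'a list \<Rightarrow> 'a \<Rightarrow> 'a set" where
  "preceding xs x = set (takeWhile (\<lambda>y. y \<noteq> x) xs)"

definition ousted :: "('r, 'h) hr_instance \<Rightarrow> ('r \<times> 'h) set \<Rightarrow> 'r \<Rightarrow> 'h \<Rightarrow> bool" where
  "ousted I M r h \<longleftrightarrow>
     (r, h) \<in> M \<and>
     card (set (prefH I h) \<inter> res_h h M) \<ge> quota I h \<and>
     (r \<notin> set (prefH I h) \<or>
      card (preceding (prefH I h) r \<inter> res_h h M) \<ge> quota I h)"

inductive feasible :: "('r, 'h) hr_instance \<Rightarrow> ('r, 'h) event list \<Rightarrow> bool"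
  for I where
  empty: "feasible I []"
| propose: "\<lbrakk> feasible I \<sigma>; r \<in> Res I; r \<notin> res (tent \<sigma>); (r, h) \<notin> prop_set \<sigma>;
             h \<in> set (prefR I r);
             \<forall>h' \<in> preceding (prefR I r) h. (r, h') \<in> rej_set \<sigma> \<rbrakk>
            \<Longrightarrow> feasible I (\<sigma> @ [Prop r h])"
| reject: "\<lbrakk> feasible I \<sigma>; ousted I (prop_set \<sigma>) r h; (r, h) \<notin> rej_set \<sigma> \<rbrakk>
            \<Longrightarrow> feasible I (\<sigma> @ [Rej r h])"

definition maximal_feasible :: "('r, 'h) hr_instance \<Rightarrow> ('r, 'h) event list \<Rightarrow> bool" where
  "maximal_feasible I \<sigma> \<longleftrightarrow> feasible I \<sigma> \<and> (\<forall>e. \<not> feasible I (\<sigma> @ [e]))"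

end

theory Submission
  imports Defs
begin

text \<open>An event enabled after some feasible sequence stays enabled after any feasible sequence
  whose events include those of the first one but not the event itself.  For rejections this is
  because ousting is monotone in the set of proposals.  For a proposal (r,h) it is because a
  resident proposes along his list, each step after a rejection of the previous choice: if every
  hospital before h has rejected r and r has not proposed to h, then r holds no tentative match.
  So the first event of one maximal sequence that is missing from another would extend the
  other, contradicting its maximality.\<close>

lemma feasible_Rej_imp_Prop:
  "feasible I \<sigma> \<Longrightarrow> Rej r h \<in> set \<sigma> \<Longrightarrow> Prop r h \<in> set \<sigma>"
  by (induction rule: feasible.induct) (auto simp: ousted_def prop_set_def)

lemma feasible_Prop_imp_preceding_rejected:
  "feasible I \<sigma> \<Longrightarrow> Prop r h \<in> set \<sigma> \<Longrightarrow>
   h \<in> set (prefR I r) \<and> (\<forall>h'\<in>preceding (prefR I r) h. Rej r h' \<in> set \<sigma>)"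
  by (induction rule: feasible.induct) (auto simp: rej_set_def)

lemma feasible_snocD: "feasible I (\<sigma> @ [e]) \<Longrightarrow> feasible I \<sigma>"
  by (cases rule: feasible.cases) auto

lemma feasible_appendD: "feasible I (\<sigma> @ \<tau>) \<Longrightarrow> feasible I \<sigma>"
  by (induction \<tau> rule: rev_induct) (auto dest: feasible_snocD simp flip: append_assoc)

lemma preceding_total:
  "x \<in> set xs \<Longrightarrow> y \<in> set xs \<Longrightarrow> x \<noteq> y \<Longrightarrow> x \<in> preceding xs y \<or> y \<in> preceding xs x"
  unfolding preceding_def
proof (induction xs)
  case (Cons a xs)
  show ?case
  proof (cases "a = x \<or> a = y")
    case True
    then show ?thesis
      using Cons.prems by (elim disjE) simp_all
  next
    case False
    then show ?thesis
      using Cons by auto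
  qed
qed simp

lemma ousted_mono:
  assumes "ousted I M r h" and "M \<subseteq> M'"
  shows "ousted I M' r h"
proof -
  have "card (set xs \<inter> res_h h M) \<le> card (set xs \<inter> res_h h M')" for xs
    using \<open>M \<subseteq> M'\<close> by (intro card_mono) (auto simp: res_h_def)
  then show ?thesis
    using assms unfolding ousted_def preceding_def by (auto intro: le_trans)
qed

lemma feasible_not_tent_if_preceding_rejected:
  assumes "feasible I \<sigma>" and "h \<in> set (prefR I r)" and "Prop r h \<notin> set \<sigma>"
    and rejected: "\<forall>h'\<in>preceding (prefR I r) h. Rej r h' \<in> set \<sigma>"
  shows "r \<notin> res (tent \<sigma>)"
proof
  assume "r \<in> res (tent \<sigma>)"
  then obtain h' where prop': "Prop r h' \<in> set \<sigma>" and "Rej r h' \<notin> set \<sigma>"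
    by (auto simp: res_def tent_def prop_set_def rej_set_def)
  then have "h' \<notin> preceding (prefR I r) h"
    using rejected by blast
  moreover have "h \<notin> preceding (prefR I r) h'"
    using feasible_Prop_imp_preceding_rejected[OF \<open>feasible I \<sigma>\<close> prop']
      feasible_Rej_imp_Prop[OF \<open>feasible I \<sigma>\<close>] \<open>Prop r h \<notin> set \<sigma>\<close> by blast
  moreover have "h' \<in> set (prefR I r)" and "h \<noteq> h'"
    using feasible_Prop_imp_preceding_rejected[OF \<open>feasible I \<sigma>\<close> prop'] prop'
      \<open>Prop r h \<notin> set \<sigma>\<close> by auto
  ultimately show False
    using preceding_total \<open>h \<in> set (prefR I r)\<close> by metis
qed

lemma feasible_snoc_transfer:
  assumes "feasible I \<sigma>" and "feasible I (\<tau> @ [e])"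
    and "set \<tau> \<subseteq> set \<sigma>" and "e \<notin> set \<sigma>"
  shows "feasible I (\<sigma> @ [e])"
  using \<open>feasible I (\<tau> @ [e])\<close>
proof cases
  case (propose \<tau>' r h)
  then have e: "e = Prop r h" and "\<tau>' = \<tau>"
    by auto
  with propose have rejected: "\<forall>h'\<in>preceding (prefR I r) h. Rej r h' \<in> set \<sigma>"
    using \<open>set \<tau> \<subseteq> set \<sigma>\<close> by (auto simp: rej_set_def)
  have "Prop r h \<notin> set \<sigma>"
    using \<open>e \<notin> set \<sigma>\<close> e by simp
  then have "r \<notin> res (tent \<sigma>)"
    using feasible_not_tent_if_preceding_rejected[OF \<open>feasible I \<sigma>\<close> \<open>h \<in> set (prefR I r)\<close>]
      rejected by blast
  moreover have "\<forall>h'\<in>preceding (prefR I r) h. (r, h') \<in> rej_set \<sigma>"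
    using rejected by (simp add: rej_set_def)
  ultimately have "feasible I (\<sigma> @ [Prop r h])"
    using feasible.propose[OF \<open>feasible I \<sigma>\<close> \<open>r \<in> Res I\<close>] \<open>Prop r h \<notin> set \<sigma>\<close>
      \<open>h \<in> set (prefR I r)\<close> by (simp add: prop_set_def)
  then show ?thesis
    using e by simp
next
  case (reject \<tau>' r h)
  then have e: "e = Rej r h" and "\<tau>' = \<tau>"
    by auto
  have "prop_set \<tau> \<subseteq> prop_set \<sigma>"
    using \<open>set \<tau> \<subseteq> set \<sigma>\<close> by (auto simp: prop_set_def)
  moreover have "ousted I (prop_set \<tau>) r h"
    using reject(3) \<open>\<tau>' = \<tau>\<close> by simp
  ultimately have "ousted I (prop_set \<sigma>) r h"
    by (rule ousted_mono[rotated])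
  moreover have "(r, h) \<notin> rej_set \<sigma>"
    using \<open>e \<notin> set \<sigma>\<close> e by (simp add: rej_set_def)
  ultimately show ?thesis
    using feasible.reject[OF \<open>feasible I \<sigma>\<close>] e by simp
qed simp

lemma maximal_feasible_set_subset:
  assumes "maximal_feasible I \<sigma>" and "maximal_feasible I \<sigma>'"
  shows "set \<sigma> \<subseteq> set \<sigma>'"
proof (rule ccontr)
  assume "\<not> set \<sigma> \<subseteq> set \<sigma>'"
  then obtain \<tau> e \<rho> where \<sigma>: "\<sigma> = \<tau> @ e # \<rho>" and "e \<notin> set \<sigma>'"
    and "\<forall>x\<in>set \<tau>. x \<in> set \<sigma>'"
    using split_list_first_prop[of \<sigma> "\<lambda>x. x \<notin> set \<sigma>'"] by auto
  moreover have "feasible I (\<tau> @ [e])"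
    using assms(1) feasible_appendD[of I "\<tau> @ [e]" \<rho>]
    unfolding maximal_feasible_def \<sigma> by simp
  ultimately have "feasible I (\<sigma>' @ [e])"
    using feasible_snoc_transfer assms(2) unfolding maximal_feasible_def by blast
  then show False
    using assms(2) unfolding maximal_feasible_def by blast
qed

theorem proposition2:
  fixes I :: "('r, 'h) hr_instance" and \<sigma> \<sigma>' :: "('r, 'h) event list"
  assumes "valid_instance I"
    and "maximal_feasible I \<sigma>"
    and "maximal_feasible I \<sigma>'"
  shows "set \<sigma> = set \<sigma>'"
  using maximal_feasible_set_subset assms(2,3) by blast

end
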